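(* Let $r_{\min}\in(0,1)$, $n\ge1$, $\gamma\ge1$ a perfect-square integer, and $\ell\ge0$ an integer with $\gamma^{\ell+1}\le n$. Put $a_\ell=n/\gamma^\ell$, $a_{\ell+1}=a_\ell/\gamma$, $n_\ell=n/(2^\ell\gamma^\ell)$, $n_{\ell+1}=n_\ell/(2\gamma)$, $K_1=\frac{4(1+r_{\min})^2}{\pi r_{\min}^2}$, $K_2=\frac1{2K_1}$, $M=K_22^{-\ell}\gamma$ (all assumed integers, $M$ even), and assume $M\ge100$. Let $V\subset[0,\sqrt{a_\ell}]^2$ with $|V|=n_\ell$ and minimum separation $r_{\min}$, partition $[0,\sqrt{a_\ell}]^2$ into $\gamma$ squarelets of side $\sqrt{a_{\ell+1}}$, and let $\mathcal D$ be a set of $M$ dense squarelets (squarelets containing at least $n_{\ell+1}$ points of $V$). Let $\lambda$ be any set of $n_\ell$ source–destination pairs on $V$ in which every node is a source exactly once and a destination exactly once. Then for each pair $p=(u,w)$ there is a set $R_p\subset\mathcal D$ of exactly $M/2$ squarelets $k$ with $r_{u,k}\ge\sqrt{2a_{\ell+1}}$ and $r_{w,k}\ge\sqrt{2a_{\ell+1}}$, and the set of incidences $\{(p,k):p\in\lambda,\ k\in R_p\}$ can be partitioned into at most $K_22^{-\ell}\gamma^2$ classes such that in each class every pair $p$ occurs at most once and every squarelet $k$ occurs in at most $n_{\ell+1}$ incidences. (Consequently each pair occurs in exactly $K_22^{-\ell-1}\gamma$ classes, with distinct squarelets.)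
   Context: For a point $u$ and a squarelet $A$, $r_{u,A}=\min_{v\in A}\lVert u-v\rVert$ denotes the Euclidean distance from $u$ to the closest point of $A$. *)

theory Defs
  imports "HOL-Analysis.Analysis" "HOL-Library.Disjoint_Sets"
begin

definition K1 :: "real \<Rightarrow> real" where
  "K1 r = 4 * (1 + r)^2 / (pi * r^2)"

definition K2 :: "real \<Rightarrow> real" where
  "K2 r = 1 / (2 * K1 r)"

definition gside :: "nat \<Rightarrow> nat" where
  "gside \<gamma> = nat \<lfloor>sqrt (real \<gamma>)\<rfloor>"

definition squarelets :: "nat \<Rightarrow> (nat \<times> nat) set" where
  "squarelets g = {0..<g} \<times> {0..<g}"

definition squarelet :: "real \<Rightarrow> nat \<times> nat \<Rightarrow> (real \<times> real) set" where
  "squarelet s k = {real (fst k) * s .. real (fst k + 1) * s} \<times> {real (snd k) * s .. real (snd k + 1) * s}"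

(* the squarelet a point belongs to in the partition (half-open cells, last row/column closed) *)
definition cell_of :: "nat \<Rightarrow> real \<Rightarrow> real \<times> real \<Rightarrow> nat \<times> nat" where
  "cell_of g s x = (min (nat \<lfloor>fst x / s\<rfloor>) (g - 1), min (nat \<lfloor>snd x / s\<rfloor>) (g - 1))"

definition dense_squarelet :: "nat \<Rightarrow> real \<Rightarrow> (real \<times> real) set \<Rightarrow> nat \<Rightarrow> nat \<times> nat \<Rightarrow> bool" where
  "dense_squarelet g s V t k \<longleftrightarrow> k \<in> squarelets g \<and> card {v \<in> V. cell_of g s v = k} \<ge> t"

definition rdist :: "real \<times> real \<Rightarrow> (real \<times> real) set \<Rightarrow> real" where
  "rdist u A = infdist u A"

end

theory Submission
  imports Defs
begin

(*
  A squarelet of side s is "near" a point u if r_{u,k} < sqrt 2 * s.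
  Only 16 squarelets can be near a given point: in each coordinate the index of a
  near squarelet lies in a window of 4 consecutive integers.  Hence for a pair
  p = (u, w) at most 32 of the M >= 100 dense squarelets are near u or w, so at least
  M - 32 >= M/2 are far from both, and we choose R_p among them.

  The partition is a scheduling argument that only uses |R_p| = m and |lam| <= g * t:
  number the squarelets of each R_p by 0..m-1; for fixed number i and squarelet k,
  split the pairs p with k numbered i in R_p into g blocks of size <= t.  The class
  of (p, k) is (number of k in R_p, block of p); there are at most m * g classes.
  With m = M/2, g = 2 * gamma, t = n_{l+1} this gives M * gamma classes.
*)

lemma coord_window:
  fixes s x v :: real and a :: nat
  assumes s: "s > 0" and v: "real a * s \<le> v" "v \<le> real (a + 1) * s"
    and close: "\<bar>x - v\<bar> < sqrt 2 * s"
  shows "a \<in> {nat \<lceil>x / s - sqrt 2 - 1\<rceil> ..< nat \<lceil>x / s - sqrt 2 - 1\<rceil> + 4}"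
proof -
  define y where "y = x / s - sqrt 2 - 1"
  have sqrt2: "sqrt 2 < 3 / 2"
    by (rule real_less_lsqrt) (auto simp: power2_eq_square)
  have "real a * s < x + sqrt 2 * s" using v close by linarith
  hence upper: "real a < x / s + sqrt 2" using s by (simp add: field_simps)
  have "real (a + 1) * s > x - sqrt 2 * s" using v close by linarith
  hence lower: "real a + 1 > x / s - sqrt 2" using s by (simp add: field_simps)
  have "y < real a" using lower unfolding y_def by linarith
  hence "\<lceil>y\<rceil> \<le> int a" by (simp add: ceiling_le_iff)
  moreover have "real a < y + 4" using upper sqrt2 unfolding y_def by linarith
  hence "int a < \<lceil>y\<rceil> + 4" using le_of_int_ceiling[of y] by linarith
  ultimately show ?thesis unfolding y_def by auto
qed

lemma near_squarelets_card:
  fixes s :: real and u :: "real \<times> real"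
  assumes s: "s > 0"
  shows "finite {k. rdist u (squarelet s k) < sqrt 2 * s}"
    and "card {k. rdist u (squarelet s k) < sqrt 2 * s} \<le> 16"
proof -
  define W where "W x = {nat \<lceil>x / s - sqrt 2 - 1\<rceil> ..< nat \<lceil>x / s - sqrt 2 - 1\<rceil> + 4}" for x
  have near_in_window: "{k. rdist u (squarelet s k) < sqrt 2 * s} \<subseteq> W (fst u) \<times> W (snd u)"
  proof
    fix k assume "k \<in> {k. rdist u (squarelet s k) < sqrt 2 * s}"
    hence near: "infdist u (squarelet s k) < sqrt 2 * s" by (simp add: rdist_def)
    have "closed (squarelet s k)"
      unfolding squarelet_def by (intro closed_Times closed_atLeastAtMost)
    moreover have "squarelet s k \<noteq> {}"
      unfolding squarelet_def using s by (auto simp: field_simps)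
    ultimately obtain v where v: "v \<in> squarelet s k" "infdist u (squarelet s k) = dist u v"
      using infdist_attains_inf by blast
    have "\<bar>fst u - fst v\<bar> < sqrt 2 * s" "\<bar>snd u - snd v\<bar> < sqrt 2 * s"
      using dist_fst_le[of u v] dist_snd_le[of u v] near v(2) by (simp_all add: dist_real_def)
    moreover have "real (fst k) * s \<le> fst v" "fst v \<le> real (fst k + 1) * s"
      "real (snd k) * s \<le> snd v" "snd v \<le> real (snd k + 1) * s"
      using v(1) unfolding squarelet_def by (auto simp: mem_Times_iff)
    ultimately show "k \<in> W (fst u) \<times> W (snd u)"
      using coord_window[OF s] unfolding W_def by (simp add: mem_Times_iff)
  qed
  have "finite (W (fst u) \<times> W (snd u))" "card (W (fst u) \<times> W (snd u)) = 16"
    unfolding W_def by (simp_all add: card_cartesian_product)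
  thus "finite {k. rdist u (squarelet s k) < sqrt 2 * s}"
    and "card {k. rdist u (squarelet s k) < sqrt 2 * s} \<le> 16"
    using finite_subset[OF near_in_window] card_mono[OF _ near_in_window] by simp_all
qed

lemma far_squarelets_card:
  fixes s :: real and u w :: "real \<times> real" and D :: "(nat \<times> nat) set"
  assumes s: "s > 0" and "finite D"
  shows "card D \<le> card {k \<in> D. rdist u (squarelet s k) \<ge> sqrt 2 * s \<and>
                               rdist w (squarelet s k) \<ge> sqrt 2 * s} + 32"
proof -
  let ?far = "{k \<in> D. rdist u (squarelet s k) \<ge> sqrt 2 * s \<and> rdist w (squarelet s k) \<ge> sqrt 2 * s}"
  let ?near = "\<lambda>x. {k. rdist x (squarelet s k) < sqrt 2 * s}"
  have "D \<subseteq> ?far \<union> ?near u \<union> ?near w" by auto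
  moreover have "finite (?far \<union> ?near u \<union> ?near w)"
    using \<open>finite D\<close> near_squarelets_card(1)[OF s] by simp
  ultimately have "card D \<le> card (?far \<union> ?near u \<union> ?near w)" by (rule card_mono[rotated])
  also have "\<dots> \<le> card ?far + card (?near u) + card (?near w)"
    by (meson add_right_mono card_Un_le le_trans)
  finally show ?thesis using near_squarelets_card(2)[OF s, of u] near_squarelets_card(2)[OF s, of w]
    by linarith
qed

text \<open>A finite set of size at most g * t can be mapped into {0..<g} so that every
  fibre has at most t elements (cut an enumeration into blocks of length t).\<close>
lemma fibres_bounded:
  fixes X :: "'a set" and g t :: nat
  assumes "finite X" and "card X \<le> g * t"
  shows "\<exists>f. f ` X \<subseteq> {0..<g} \<and> (\<forall>j. card {x \<in> X. f x = j} \<le> t)"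
proof (cases "t = 0")
  case True
  thus ?thesis using assms by simp
next
  case False
  obtain h where h: "bij_betw h X {0..<card X}"
    using ex_bij_betw_finite_nat[OF assms(1)] by blast
  have "card {x \<in> X. h x div t = j} \<le> t" for j
  proof -
    have "inj_on h {x \<in> X. h x div t = j}"
      using h by (auto simp: bij_betw_def inj_on_def)
    moreover have "h ` {x \<in> X. h x div t = j} \<subseteq> {j * t ..< j * t + t}"
      using False by (auto simp: mult.commute) (metis dividend_less_times_div add.commute)
    ultimately show ?thesis
      using card_inj_on_le[of h _ "{j * t ..< j * t + t}"] by simp
  qed
  moreover have "(\<lambda>x. h x div t) ` X \<subseteq> {0..<g}"
  proof clarify
    fix x assume "x \<in> X"
    hence "h x < card X" using h by (auto dest: bij_betwE)
    hence "h x < g * t" using assms(2) by linarith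
    thus "h x div t \<in> {0..<g}" using False by (simp add: div_less_iff_less_mult)
  qed
  ultimately show ?thesis by blast
qed

lemma partition_on_fibres:
  "partition_on I ((\<lambda>c. {x \<in> I. f x = c}) ` f ` I)"
  unfolding partition_on_def disjoint_def by auto

lemma incidence_partition:
  fixes lam :: "'p set" and R :: "'p \<Rightarrow> 'k set" and m g t :: nat
  assumes fin: "finite lam" and R: "\<forall>p\<in>lam. finite (R p) \<and> card (R p) = m"
    and size: "card lam \<le> g * t"
  shows "\<exists>P. partition_on {(p, k). p \<in> lam \<and> k \<in> R p} P \<and> card P \<le> m * g \<and>
     (\<forall>C\<in>P. (\<forall>p. card {k. (p, k) \<in> C} \<le> 1) \<and> (\<forall>k. card {p. (p, k) \<in> C} \<le> t))"
proof -
  define I where "I = {(p, k). p \<in> lam \<and> k \<in> R p}"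
  define num where "num p = (SOME h. bij_betw h (R p) {0..<m})" for p
  have num: "bij_betw (num p) (R p) {0..<m}" if "p \<in> lam" for p
  proof -
    have "\<exists>h. bij_betw h (R p) {0..<m}" using ex_bij_betw_finite_nat[of "R p"] R that by auto
    thus ?thesis unfolding num_def by (rule someI_ex)
  qed
  define S where "S i k = {p \<in> lam. k \<in> R p \<and> num p k = i}" for i k
  define block where "block i k = (SOME f. f ` S i k \<subseteq> {0..<g} \<and>
                                     (\<forall>j. card {p \<in> S i k. f p = j} \<le> t))" for i k
  have block: "block i k ` S i k \<subseteq> {0..<g} \<and> (\<forall>j. card {p \<in> S i k. block i k p = j} \<le> t)" for i k
  proof -
    have "card (S i k) \<le> g * t"
      using card_mono[OF fin, of "S i k"] size unfolding S_def by auto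
    thus ?thesis
      unfolding block_def by (rule someI_ex[OF fibres_bounded[rotated]]) (simp add: fin S_def)
  qed
  define cls where "cls x = (case x of (p, k) \<Rightarrow> (num p k, block (num p k) k p))" for x
  define P where "P = (\<lambda>c. {x \<in> I. cls x = c}) ` cls ` I"
  have "cls x \<in> {0..<m} \<times> {0..<g}" if x: "x \<in> I" for x
  proof -
    obtain p k where pk: "x = (p, k)" "p \<in> lam" "k \<in> R p" using x unfolding I_def by auto
    have "num p k < m" using bij_betwE[OF num[OF pk(2)]] pk(3) by auto
    moreover have "p \<in> S (num p k) k" unfolding S_def using pk by auto
    hence "block (num p k) k p < g" using block[of "num p k" k] by auto
    ultimately show ?thesis unfolding pk(1) cls_def by simp
  qed
  hence classes: "cls ` I \<subseteq> {0..<m} \<times> {0..<g}" by blast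
  have "card P \<le> card (cls ` I)"
    unfolding P_def by (rule card_image_le) (rule finite_subset[OF classes], simp)
  also have "\<dots> \<le> m * g"
    using card_mono[OF _ classes] by (simp add: card_cartesian_product)
  finally have card_P: "card P \<le> m * g" .
  have "partition_on I P" unfolding P_def by (rule partition_on_fibres)
  moreover have "(\<forall>p. card {k. (p, k) \<in> C} \<le> 1) \<and> (\<forall>k. card {p. (p, k) \<in> C} \<le> t)" if "C \<in> P" for C
  proof -
    obtain i j where C: "C = {x \<in> I. cls x = (i, j)}" using \<open>C \<in> P\<close> unfolding P_def by auto
    have "card {k. (p, k) \<in> C} \<le> 1" for p
    proof (cases "p \<in> lam")
      case False
      hence "{k. (p, k) \<in> C} = {}" unfolding C I_def by auto
      thus ?thesis by simp
    next
      case True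
      have "{k. (p, k) \<in> C} \<subseteq> R p" unfolding C I_def by auto
      hence "finite {k. (p, k) \<in> C}" using R True finite_subset by blast
      moreover have "a = b" if "a \<in> {k. (p, k) \<in> C}" "b \<in> {k. (p, k) \<in> C}" for a b
      proof -
        have "a \<in> R p" "b \<in> R p" "num p a = num p b"
          using that unfolding C I_def cls_def by auto
        thus "a = b" using num[OF True] by (meson bij_betw_imp_inj_on inj_onD)
      qed
      ultimately show ?thesis by (simp add: card_le_Suc0_iff_eq)
    qed
    moreover have "card {p. (p, k) \<in> C} \<le> t" for k
    proof -
      have "{p. (p, k) \<in> C} = {p \<in> S i k. block i k p = j}"
        unfolding C I_def S_def cls_def by auto
      thus ?thesis using block by simp
    qed
    ultimately show ?thesis by blast
  qed
  ultimately show ?thesis using card_P unfolding I_def by blast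
qed

lemma pairing_card_le:
  fixes lam :: "('a \<times> 'a) set"
  assumes "finite V" "lam \<subseteq> V \<times> V" "\<forall>u\<in>V. \<exists>!w. (u, w) \<in> lam"
  shows "card lam \<le> card V"
proof -
  have "inj_on fst lam"
    using assms(2,3) by (fastforce simp: inj_on_def prod_eq_iff)
  moreover have "fst ` lam \<subseteq> V" using assms(2) by auto
  ultimately show ?thesis using card_inj_on_le[OF _ _ assms(1)] by blast
qed

theorem lemma6:
  fixes rmin :: real and n \<gamma> l al al1 nl nl1 M :: nat
    and V :: "(real \<times> real) set" and D :: "(nat \<times> nat) set"
    and lam :: "((real \<times> real) \<times> (real \<times> real)) set"
  assumes "0 < rmin" "rmin < 1" "n \<ge> 1" "\<gamma> \<ge> 1" "\<exists>g::nat. \<gamma> = g^2"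
    and "\<gamma> ^ (l + 1) \<le> n"
    and "real al = real n / real \<gamma> ^ l"
    and "real al1 = real al / real \<gamma>"
    and "real nl = real n / (2 ^ l * real \<gamma> ^ l)"
    and "real nl1 = real nl / (2 * real \<gamma>)"
    and "real M = K2 rmin * real \<gamma> / 2 ^ l"
    and "even M" "M \<ge> 100"
    and "finite V" "card V = nl" "V \<subseteq> {0..sqrt (real al)} \<times> {0..sqrt (real al)}"
    and "\<forall>u\<in>V. \<forall>v\<in>V. u \<noteq> v \<longrightarrow> dist u v \<ge> rmin"
    and "D \<subseteq> {k. dense_squarelet (gside \<gamma>) (sqrt (real al1)) V nl1 k}" "card D = M"
    and "lam \<subseteq> V \<times> V" "\<forall>u\<in>V. \<exists>!w. (u, w) \<in> lam" "\<forall>w\<in>V. \<exists>!u. (u, w) \<in> lam"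
  shows "\<exists>R. (\<forall>p\<in>lam. R p \<subseteq> D \<and> card (R p) = M div 2 \<and>
              (\<forall>k\<in>R p. rdist (fst p) (squarelet (sqrt (real al1)) k) \<ge> sqrt (2 * real al1) \<and>
                        rdist (snd p) (squarelet (sqrt (real al1)) k) \<ge> sqrt (2 * real al1)))
           \<and> (\<exists>P. partition_on {(p, k). p \<in> lam \<and> k \<in> R p} P
                  \<and> real (card P) \<le> K2 rmin * real \<gamma> ^ 2 / 2 ^ l
                  \<and> (\<forall>C\<in>P. (\<forall>p. card {k. (p, k) \<in> C} \<le> 1) \<and>
                             (\<forall>k. card {p. (p, k) \<in> C} \<le> nl1)))"
proof -
  let ?s = "sqrt (real al1)"
  define far where "far p = {k \<in> D. rdist (fst p) (squarelet ?s k) \<ge> sqrt (2 * real al1) \<and>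
                                      rdist (snd p) (squarelet ?s k) \<ge> sqrt (2 * real al1)}" for p
  \<comment> \<open>a squarelet has side at least 1, since al1 * gamma^(l+1) = n\<close>
  have "real al1 * real \<gamma> ^ (l + 1) = (real \<gamma> * real al1) * real \<gamma> ^ l"
    by (simp add: algebra_simps)
  also have "\<dots> = real n" using assms(4,7,8) by (simp add: field_simps)
  finally have "real al1 * real \<gamma> ^ (l + 1) = real n" .
  moreover have "real \<gamma> ^ (l + 1) \<le> real n"
    using assms(6) by (metis of_nat_le_iff of_nat_power)
  moreover have "real \<gamma> ^ (l + 1) > 0" using assms(4) by simp
  ultimately have "real al1 \<ge> 1" by (smt (verit) mult_less_cancel_right2)
  hence side: "?s > 0" by simp
  have "finite D" using assms(13,19) card.infinite by fastforce
  hence "M div 2 \<le> card (far p)" for p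
    using far_squarelets_card[OF side, of D "fst p" "snd p"] assms(13,19)
    by (simp add: far_def real_sqrt_mult)
  hence "\<forall>p. \<exists>X. X \<subseteq> far p \<and> card X = M div 2 \<and> finite X"
    using obtain_subset_with_card_n by metis
  then obtain R where R: "\<forall>p. R p \<subseteq> far p \<and> card (R p) = M div 2 \<and> finite (R p)"
    by metis
  \<comment> \<open>schedule with m = M/2, g = 2 gamma and t = n_{l+1}\<close>
  have "real nl = 2 * real \<gamma> * real nl1" using assms(4,10) by (simp add: field_simps)
  hence "nl = 2 * \<gamma> * nl1" by (metis of_nat_eq_iff of_nat_mult of_nat_numeral)
  hence "card lam \<le> (2 * \<gamma>) * nl1" using pairing_card_le[OF assms(14,20,21)] assms(15) by simp
  then obtain P where P: "partition_on {(p, k). p \<in> lam \<and> k \<in> R p} P" "card P \<le> M div 2 * (2 * \<gamma>)"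
      "\<forall>C\<in>P. (\<forall>p. card {k. (p, k) \<in> C} \<le> 1) \<and> (\<forall>k. card {p. (p, k) \<in> C} \<le> nl1)"
    using incidence_partition[of lam R "M div 2" "2 * \<gamma>" nl1] R assms(14,20) finite_subset by blast
  have "M div 2 * (2 * \<gamma>) = M * \<gamma>" using assms(12) by auto
  hence "real (card P) \<le> real M * real \<gamma>" using P(2) by (metis of_nat_le_iff of_nat_mult)
  also have "\<dots> = K2 rmin * real \<gamma> ^ 2 / 2 ^ l" using assms(11) by (simp add: power2_eq_square)
  finally show ?thesis using R P(1,3) unfolding far_def by blast
qed

end
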